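(* Let $A$ be a complex commutative completely regular semi-simple Banach algebra, $\widetilde{\sigma}:A\to A$ an algebra automorphism, and $\sigma:\Delta(A)\to\Delta(A)$ the homeomorphism (for the Gelfand topology) $\sigma(\mu)=\mu\circ\widetilde{\sigma}^{-1}$, with $\widehat{\sigma}(\widehat{a})=\widehat{a}\circ\sigma^{-1}$ the induced automorphism of $\widehat{A}$. Then the set of non-periodic points $\{\mu\in\Delta(A):\sigma^n(\mu)\neq\mu\text{ for all } n\neq 0\}$ is dense in $\Delta(A)$ if and only if $\widehat{A}$ is a maximal abelian subalgebra of $\widehat{A}\rtimes_{\widehat{\sigma}}\mathbb{Z}$. In particular, $A$ is maximal abelian in $A\rtimes_{\widetilde{\sigma}}\mathbb{Z}$ if and only if the non-periodic points of $(\Delta(A),\sigma)$ are dense in $\Delta(A)$.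
   Context: $\Delta(A)$ is the set of non-zero multiplicative linear functionals on $A$; the Gelfand transform of $a$ is $\widehat{a}(\mu)=\mu(a)$, $\widehat{A}$ is the set of Gelfand transforms, and the Gelfand topology is the weakest topology making all $\widehat{a}$ continuous. $A$ is semi-simple if the Gelfand transform is injective, and completely regular if for every Gelfand-closed $F\subseteq\Delta(A)$ and $\phi_0\in\Delta(A)\setminus F$ there is $a\in A$ with $\widehat{a}=0$ on $F$ and $\widehat{a}(\phi_0)\neq0$. For an algebra $B$ with automorphism $\Psi$, $B\rtimes_\Psi\mathbb{Z}$ is the set of finitely supported functions $\mathbb{Z}\to B$, written $\sum_n b_n\delta^n$, with pointwise linear operations and multiplication determined by $(b_n\delta^n)*(c_m\delta^m)=b_n\Psi^n(c_m)\delta^{n+m}$; $B$ is embedded as $\{b_0\delta^0\}$. *)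

theory Defs
  imports "HOL-Analysis.Analysis" "HOL-Library.Function_Algebras"
begin

text \<open>The ambient type carries a real Banach algebra structure (type classes);
  the complex structure is an explicit scalar multiplication \<open>smul\<close> extending
  the real one, bilinear w.r.t. the product and isometric.\<close>

definition complex_banach_scalar :: "(complex \<Rightarrow> 'a::{comm_ring,real_normed_algebra,banach} \<Rightarrow> 'a) \<Rightarrow> bool" where
  "complex_banach_scalar smul \<longleftrightarrow>
     (\<forall>c d x. smul (c + d) x = smul c x + smul d x) \<and>
     (\<forall>c x y. smul c (x + y) = smul c x + smul c y) \<and>
     (\<forall>c d x. smul (c * d) x = smul c (smul d x)) \<and>
     (\<forall>x. smul 1 x = x) \<and>
     (\<forall>r x. smul (complex_of_real r) x = scaleR r x) \<and>
     (\<forall>c x y. smul c (x * y) = smul c x * y) \<and>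
     (\<forall>c x. norm (smul c x) = cmod c * norm x)"

definition characters :: "(complex \<Rightarrow> 'a::comm_ring \<Rightarrow> 'a) \<Rightarrow> ('a \<Rightarrow> complex) set" where
  "characters smul = {\<mu>. \<mu> \<noteq> (\<lambda>_. 0) \<and>
     (\<forall>a b. \<mu> (a + b) = \<mu> a + \<mu> b) \<and>
     (\<forall>c a. \<mu> (smul c a) = c * \<mu> a) \<and>
     (\<forall>a b. \<mu> (a * b) = \<mu> a * \<mu> b)}"

definition gelfand :: "(complex \<Rightarrow> 'a::comm_ring \<Rightarrow> 'a) \<Rightarrow> 'a \<Rightarrow> (('a \<Rightarrow> complex) \<Rightarrow> complex)" where
  "gelfand smul a = (\<lambda>\<mu>. if \<mu> \<in> characters smul then \<mu> a else 0)"

definition gelfand_topology :: "(complex \<Rightarrow> 'a::comm_ring \<Rightarrow> 'a) \<Rightarrow> ('a \<Rightarrow> complex) topology" where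
  "gelfand_topology smul = topology_generated_by
     {{\<mu> \<in> characters smul. \<mu> a \<in> U} | a U. open U}"

definition semisimple :: "(complex \<Rightarrow> 'a::comm_ring \<Rightarrow> 'a) \<Rightarrow> bool" where
  "semisimple smul \<longleftrightarrow> inj (gelfand smul)"

definition completely_regular :: "(complex \<Rightarrow> 'a::comm_ring \<Rightarrow> 'a) \<Rightarrow> bool" where
  "completely_regular smul \<longleftrightarrow>
     (\<forall>F \<phi>0. closedin (gelfand_topology smul) F \<and> \<phi>0 \<in> characters smul - F \<longrightarrow>
        (\<exists>a. (\<forall>\<mu>\<in>F. \<mu> a = 0) \<and> \<phi>0 a \<noteq> 0))"

definition algebra_automorphism :: "(complex \<Rightarrow> 'a::comm_ring \<Rightarrow> 'a) \<Rightarrow> ('a \<Rightarrow> 'a) \<Rightarrow> bool" where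
  "algebra_automorphism smul f \<longleftrightarrow> bij f \<and>
     (\<forall>a b. f (a + b) = f a + f b) \<and>
     (\<forall>a b. f (a * b) = f a * f b) \<and>
     (\<forall>c a. f (smul c a) = smul c (f a))"

definition int_iter :: "('b \<Rightarrow> 'b) \<Rightarrow> int \<Rightarrow> 'b \<Rightarrow> 'b" where
  "int_iter f n = (if 0 \<le> n then f ^^ nat n else inv f ^^ nat (- n))"

definition cp_carrier :: "'b::ring set \<Rightarrow> (int \<Rightarrow> 'b) set" where
  "cp_carrier B = {F. (\<forall>n. F n \<in> B) \<and> finite {n. F n \<noteq> 0}}"

definition cp_add :: "(int \<Rightarrow> 'b::ring) \<Rightarrow> (int \<Rightarrow> 'b) \<Rightarrow> (int \<Rightarrow> 'b)" where
  "cp_add F G = (\<lambda>n. F n + G n)"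

definition cp_smul :: "(complex \<Rightarrow> 'b::ring \<Rightarrow> 'b) \<Rightarrow> complex \<Rightarrow> (int \<Rightarrow> 'b) \<Rightarrow> (int \<Rightarrow> 'b)" where
  "cp_smul smul c F = (\<lambda>n. smul c (F n))"

text \<open>\<open>(b_n \<delta>^n) * (c_m \<delta>^m) = b_n \<Psi>^n(c_m) \<delta>^(n+m)\<close>, extended bilinearly.\<close>
definition cp_mult :: "('b::ring \<Rightarrow> 'b) \<Rightarrow> (int \<Rightarrow> 'b) \<Rightarrow> (int \<Rightarrow> 'b) \<Rightarrow> (int \<Rightarrow> 'b)" where
  "cp_mult \<Psi> F G = (\<lambda>k. \<Sum>n\<in>{n. F n \<noteq> 0}. F n * int_iter \<Psi> n (G (k - n)))"

definition cp_emb :: "'b::ring \<Rightarrow> (int \<Rightarrow> 'b)" where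
  "cp_emb b = (\<lambda>n. if n = 0 then b else 0)"

definition cp_subalgebra :: "(complex \<Rightarrow> 'b::ring \<Rightarrow> 'b) \<Rightarrow> ('b \<Rightarrow> 'b) \<Rightarrow> 'b set \<Rightarrow> (int \<Rightarrow> 'b) set \<Rightarrow> bool" where
  "cp_subalgebra smul \<Psi> B D \<longleftrightarrow> D \<subseteq> cp_carrier B \<and> (\<lambda>_. 0) \<in> D \<and>
     (\<forall>F\<in>D. \<forall>G\<in>D. cp_add F G \<in> D \<and> cp_mult \<Psi> F G \<in> D) \<and>
     (\<forall>c. \<forall>F\<in>D. cp_smul smul c F \<in> D)"

definition cp_abelian :: "('b::ring \<Rightarrow> 'b) \<Rightarrow> (int \<Rightarrow> 'b) set \<Rightarrow> bool" where
  "cp_abelian \<Psi> D \<longleftrightarrow> (\<forall>F\<in>D. \<forall>G\<in>D. cp_mult \<Psi> F G = cp_mult \<Psi> G F)"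

definition cp_maximal_abelian :: "(complex \<Rightarrow> 'b::ring \<Rightarrow> 'b) \<Rightarrow> ('b \<Rightarrow> 'b) \<Rightarrow> 'b set \<Rightarrow> (int \<Rightarrow> 'b) set \<Rightarrow> bool" where
  "cp_maximal_abelian smul \<Psi> B D \<longleftrightarrow> cp_subalgebra smul \<Psi> B D \<and> cp_abelian \<Psi> D \<and>
     (\<forall>E. cp_subalgebra smul \<Psi> B E \<and> cp_abelian \<Psi> E \<and> D \<subseteq> E \<longrightarrow> E = D)"

definition char_map :: "('a \<Rightarrow> 'a) \<Rightarrow> ('a \<Rightarrow> complex) \<Rightarrow> ('a \<Rightarrow> complex)" where
  "char_map st = (\<lambda>\<mu>. \<mu> \<circ> inv st)"

definition hat_map :: "('a \<Rightarrow> 'a) \<Rightarrow> (('a \<Rightarrow> complex) \<Rightarrow> complex) \<Rightarrow> (('a \<Rightarrow> complex) \<Rightarrow> complex)" where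
  "hat_map st = (\<lambda>f. f \<circ> inv (char_map st))"

definition nonperiodic_points :: "(complex \<Rightarrow> 'a::comm_ring \<Rightarrow> 'a) \<Rightarrow> ('a \<Rightarrow> 'a) \<Rightarrow> ('a \<Rightarrow> complex) set" where
  "nonperiodic_points smul st =
     {\<mu> \<in> characters smul. \<forall>n::int. n \<noteq> 0 \<longrightarrow> int_iter (char_map st) n \<mu> \<noteq> \<mu>}"

end

theory Submission
  imports Defs
begin

(*
  Both maximality statements reduce to one algebraic condition: the embedded commutative
  algebra B is maximal abelian in the crossed product by Psi iff for every k ~= 0 the only
  x in B with x Psi^k(b) = b x for all b in B is x = 0; indeed the commutant of B consists
  of the finite sums of terms x_k delta^k with x_k of this kind.  For semisimple A the
  Gelfand transform carries this condition for A to the one for A^, and x satisfies it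
  iff sigma^k fixes every character mu with mu(x) ~= 0.

  If the non-periodic points are dense, the open set {mu. mu(x) ~= 0} of such an x is
  empty, so x = 0.  Conversely, suppose a nonempty open V contains only periodic points.
  Complete regularity gives a with a^ vanishing off V and a^(phi) ~= 0.  Characters have
  norm at most 1, so by Tychonoff {mu. |mu(a)| >= eps} is compact for eps > 0; hence
  W = {mu. |mu(a)| > |phi(a)|/2} is locally compact.  W is covered by the countably many
  closed sets of characters fixed by sigma^k, k ~= 0, so by Baire one of them has interior
  in W, and complete regularity once more produces a nonzero x as above.
*)

section \<open>Integer iterates of a bijection\<close>

lemma int_iter_0 [simp]: "int_iter f 0 = id"
  by (simp add: int_iter_def)

lemma int_iter_minus_1: "int_iter f (- 1) = inv f"
  by (simp add: int_iter_def)

lemma int_iter_succ: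
  assumes "bij f"
  shows "int_iter f (n + 1) = f \<circ> int_iter f n"
proof (cases "n \<ge> 0")
  case True
  then have "nat (n + 1) = Suc (nat n)" by simp
  with True show ?thesis by (simp add: int_iter_def)
next
  case False
  then have "nat (- n) = Suc (nat (- (n + 1)))" by simp
  then have "int_iter f n = inv f \<circ> int_iter f (n + 1)"
    using False by (cases "n = -1") (simp_all add: int_iter_def)
  with assms show ?thesis
    by (simp add: fun_eq_iff bij_is_surj surj_f_inv_f)
qed

lemma int_iter_pred:
  assumes "bij f"
  shows "int_iter f (n - 1) = inv f \<circ> int_iter f n"
  using int_iter_succ[OF assms, of "n - 1"] assms
  by (simp add: fun_eq_iff bij_is_inj)

lemma int_iter_unique:
  assumes "bij f" and step: "\<And>n. \<phi> (n + 1) = f \<circ> \<phi> n"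
  shows "\<phi> n = int_iter f n \<circ> \<phi> 0"
proof (induction n rule: int_induct[where k = 0])
  case (step1 i)
  then show ?case by (simp add: step int_iter_succ[OF assms(1)] o_assoc)
next
  case (step2 i)
  have "\<phi> (i - 1) = inv f \<circ> \<phi> i"
    using step[of "i - 1"] assms(1) by (simp add: fun_eq_iff bij_is_inj)
  with step2 show ?case by (simp add: int_iter_pred[OF assms(1)] o_assoc)
qed simp

lemma int_iter_add:
  assumes "bij f"
  shows "int_iter f (m + n) = int_iter f n \<circ> int_iter f m"
  using int_iter_unique[OF assms, of "\<lambda>n. int_iter f (m + n)"]
  by (simp add: int_iter_succ[OF assms, symmetric] add.assoc)

lemma int_iter_closed:
  assumes "id \<in> M" "f \<in> M" "inv f \<in> M" "\<And>g h. g \<in> M \<Longrightarrow> h \<in> M \<Longrightarrow> g \<circ> h \<in> M"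
  shows "int_iter f n \<in> M"
proof -
  have "g ^^ k \<in> M" if "g \<in> M" for g k
    using that assms(1,4) by (induction k) simp_all
  with assms(2,3) show ?thesis by (simp add: int_iter_def)
qed

lemma int_iter_semiconj:
  assumes f: "bij f" and g: "bij g" and hfg: "h \<circ> f = g \<circ> h"
  shows "h \<circ> int_iter f n = int_iter g n \<circ> h"
proof (induction n rule: int_induct[where k = 0])
  case (step1 i)
  then show ?case
    by (simp add: int_iter_succ[OF f] int_iter_succ[OF g] fun_eq_iff)
       (metis comp_apply hfg)
next
  case (step2 i)
  have "h \<circ> inv f = inv g \<circ> h"
  proof
    fix x
    have "g (h (inv f x)) = h (f (inv f x))" using hfg by (metis comp_apply)
    also have "\<dots> = h x" using f by (simp add: bij_is_surj surj_f_inv_f)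
    finally show "(h \<circ> inv f) x = (inv g \<circ> h) x" using g by (simp add: bij_inv_eq_iff)
  qed
  with step2 show ?case
    by (simp add: int_iter_pred[OF f] int_iter_pred[OF g] fun_eq_iff)
qed simp

section \<open>Automorphisms, characters and the Gelfand transform\<close>

context
  fixes smul :: "complex \<Rightarrow> 'a::comm_ring \<Rightarrow> 'a"
begin

lemma algebra_automorphism_id: "algebra_automorphism smul id"
  by (simp add: algebra_automorphism_def)

lemma algebra_automorphism_comp:
  "algebra_automorphism smul f \<Longrightarrow> algebra_automorphism smul g \<Longrightarrow> algebra_automorphism smul (f \<circ> g)"
  by (auto simp: algebra_automorphism_def bij_comp)

lemma algebra_automorphism_inv:
  assumes "algebra_automorphism smul f"
  shows "algebra_automorphism smul (inv f)"
proof -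
  have f: "bij f" "\<And>x y. f (x + y) = f x + f y" "\<And>x y. f (x * y) = f x * f y"
    "\<And>c x. f (smul c x) = smul c (f x)"
    using assms by (auto simp: algebra_automorphism_def)
  interpret bijection f by (rule bijection.intro[OF f(1)])
  have "inv f (x + y) = inv f x + inv f y" "inv f (x * y) = inv f x * inv f y"
    "inv f (smul c x) = smul c (inv f x)" for x y c
    by (simp_all add: f)
  with f(1) show ?thesis by (simp add: algebra_automorphism_def bij_inv)
qed

lemma algebra_automorphism_int_iter:
  "algebra_automorphism smul f \<Longrightarrow> algebra_automorphism smul (int_iter f n)"
  using int_iter_closed[of "Collect (algebra_automorphism smul)"]
  by (simp add: algebra_automorphism_id algebra_automorphism_comp algebra_automorphism_inv)

lemma algebra_automorphism_zero: "algebra_automorphism smul f \<Longrightarrow> f 0 = 0"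
  unfolding algebra_automorphism_def by (metis add_cancel_right_right)

lemma character_add: "\<mu> \<in> characters smul \<Longrightarrow> \<mu> (a + b) = \<mu> a + \<mu> b"
  and character_mult: "\<mu> \<in> characters smul \<Longrightarrow> \<mu> (a * b) = \<mu> a * \<mu> b"
  and character_smul: "\<mu> \<in> characters smul \<Longrightarrow> \<mu> (smul c a) = c * \<mu> a"
  by (simp_all add: characters_def)

lemma character_zero: "\<mu> \<in> characters smul \<Longrightarrow> \<mu> 0 = 0"
  using character_add[of \<mu> 0 0] by simp

lemma character_comp_automorphism:
  assumes "algebra_automorphism smul f" "\<mu> \<in> characters smul"
  shows "\<mu> \<circ> f \<in> characters smul"
proof -
  interpret bijection f using assms(1) by (simp add: bijection_def algebra_automorphism_def)
  obtain x where "\<mu> x \<noteq> 0" using assms(2) by (auto simp: characters_def fun_eq_iff)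
  then have "(\<mu> \<circ> f) (inv f x) \<noteq> 0" by simp
  then have "\<mu> \<circ> f \<noteq> (\<lambda>_. 0)" by force
  with assms show ?thesis by (simp add: characters_def algebra_automorphism_def)
qed

lemma character_comp_automorphism_iff:
  assumes "algebra_automorphism smul f"
  shows "\<mu> \<circ> f \<in> characters smul \<longleftrightarrow> \<mu> \<in> characters smul"
proof
  interpret bijection f using assms by (simp add: bijection_def algebra_automorphism_def)
  assume "\<mu> \<circ> f \<in> characters smul"
  from character_comp_automorphism[OF algebra_automorphism_inv[OF assms] this]
  show "\<mu> \<in> characters smul" by (simp flip: o_assoc)
qed (rule character_comp_automorphism[OF assms])

lemma gelfand_add: "gelfand smul (a + b) = gelfand smul a + gelfand smul b"
  and gelfand_mult: "gelfand smul (a * b) = gelfand smul a * gelfand smul b"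
  and gelfand_smul: "gelfand smul (smul c a) = (\<lambda>\<mu>. c * gelfand smul a \<mu>)"
  and gelfand_zero: "gelfand smul 0 = 0"
  by (simp_all add: fun_eq_iff gelfand_def
      character_add character_mult character_smul character_zero)

lemma semisimple_eqI:
  assumes "semisimple smul" "\<And>\<mu>. \<mu> \<in> characters smul \<Longrightarrow> \<mu> x = \<mu> y"
  shows "x = y"
proof -
  have "gelfand smul x = gelfand smul y"
    using assms(2) by (simp add: fun_eq_iff gelfand_def)
  with assms(1) show ?thesis by (simp add: semisimple_def inj_eq)
qed

end

lemma bij_char_map:
  assumes "bij st"
  shows "bij (char_map st)"
proof -
  interpret bijection st by (rule bijection.intro[OF assms])
  show ?thesis
    by (rule o_bij[where g = "\<lambda>\<mu>. \<mu> \<circ> st"]) (simp_all add: char_map_def fun_eq_iff)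
qed

lemma inv_char_map:
  assumes "bij st"
  shows "inv (char_map st) = (\<lambda>\<mu>. \<mu> \<circ> st)"
proof -
  interpret bijection st by (rule bijection.intro[OF assms])
  show ?thesis
    by (rule inv_unique_comp) (simp_all add: char_map_def fun_eq_iff)
qed

lemma int_iter_char_map:
  assumes "bij st"
  shows "int_iter (char_map st) n \<mu> = \<mu> \<circ> int_iter st (- n)"
proof -
  have "int_iter st (- (n + 1)) = int_iter st (- n) \<circ> inv st" for n
    using int_iter_add[OF assms, of "- 1" "- n"] by (simp add: int_iter_minus_1 algebra_simps)
  then have "(\<lambda>\<mu>. \<mu> \<circ> int_iter st (- (n + 1))) = char_map st \<circ> (\<lambda>\<mu>. \<mu> \<circ> int_iter st (- n))" for n
    by (simp add: char_map_def fun_eq_iff)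
  from int_iter_unique[OF bij_char_map[OF assms], of "\<lambda>n \<mu>. \<mu> \<circ> int_iter st (- n)", OF this]
  show ?thesis
    by (simp add: fun_eq_iff)
qed

lemma hat_map_apply: "bij st \<Longrightarrow> hat_map st f \<mu> = f (\<mu> \<circ> st)"
  by (simp add: hat_map_def inv_char_map)

lemma bij_hat_map:
  assumes "bij st"
  shows "bij (hat_map st)"
proof -
  interpret bijection st by (rule bijection.intro[OF assms])
  show ?thesis
    by (rule o_bij[where g = "\<lambda>f. f \<circ> char_map st"])
       (simp_all add: hat_map_apply[OF assms] char_map_def fun_eq_iff flip: o_assoc)
qed

lemma algebra_automorphism_hat_map:
  assumes "bij st"
  shows "algebra_automorphism (\<lambda>c f \<mu>. c * f \<mu>) (hat_map st)"
  using assms by (simp add: algebra_automorphism_def bij_hat_map hat_map_apply fun_eq_iff)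

lemma hat_map_gelfand:
  assumes "algebra_automorphism smul st"
  shows "hat_map st (gelfand smul b) = gelfand smul (st b)"
  using assms character_comp_automorphism_iff[OF assms]
  by (simp add: fun_eq_iff hat_map_apply gelfand_def algebra_automorphism_def)

section \<open>Maximal abelian subalgebras of crossed products\<close>

lemma cp_mult_emb_left: "cp_mult \<Psi> (cp_emb b) F = (\<lambda>k. b * F k)"
proof (cases "b = 0")
  case False
  then have "{n. cp_emb b n \<noteq> 0} = {0}" by (auto simp: cp_emb_def)
  then show ?thesis by (simp add: cp_mult_def cp_emb_def)
qed (simp add: cp_mult_def cp_emb_def)

lemma cp_mult_emb_right:
  assumes "\<And>n. int_iter \<Psi> n 0 = 0" and "finite {n. F n \<noteq> 0}"
  shows "cp_mult \<Psi> F (cp_emb b) = (\<lambda>k. F k * int_iter \<Psi> k b)"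
proof
  fix k
  have "cp_mult \<Psi> F (cp_emb b) k = (\<Sum>n | F n \<noteq> 0. if n = k then F k * int_iter \<Psi> k b else 0)"
    unfolding cp_mult_def cp_emb_def by (rule sum.cong) (auto simp: assms(1))
  also have "\<dots> = F k * int_iter \<Psi> k b"
    using assms(2) by (cases "F k = 0") (simp_all add: sum.delta)
  finally show "cp_mult \<Psi> F (cp_emb b) k = F k * int_iter \<Psi> k b" .
qed

text \<open>\<open>x \<delta>\<^sup>k\<close> commutes with every \<open>b \<delta>\<^sup>0\<close> (\<open>b \<in> B\<close>) iff \<open>x \<in> intertwiners \<Psi> B k\<close>.\<close>
definition intertwiners :: "('b::comm_ring \<Rightarrow> 'b) \<Rightarrow> 'b set \<Rightarrow> int \<Rightarrow> 'b set" where
  "intertwiners \<Psi> B k = {x \<in> B. \<forall>b\<in>B. x * int_iter \<Psi> k b = b * x}"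

definition cp_commutant :: "('b::comm_ring \<Rightarrow> 'b) \<Rightarrow> 'b set \<Rightarrow> (int \<Rightarrow> 'b) set" where
  "cp_commutant \<Psi> B = {F \<in> cp_carrier B. \<forall>k. F k \<in> intertwiners \<Psi> B k}"

locale invariant_subalgebra =
  fixes smul :: "complex \<Rightarrow> 'b::comm_ring \<Rightarrow> 'b" and \<Psi> :: "'b \<Rightarrow> 'b" and B :: "'b set"
  assumes automorphism: "algebra_automorphism smul \<Psi>"
    and image_eq: "\<Psi> ` B = B"
    and zero_mem: "0 \<in> B"
    and add_mem: "x \<in> B \<Longrightarrow> y \<in> B \<Longrightarrow> x + y \<in> B"
    and mult_mem: "x \<in> B \<Longrightarrow> y \<in> B \<Longrightarrow> x * y \<in> B"
    and smul_mem: "x \<in> B \<Longrightarrow> smul c x \<in> B"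
    and smul_mult: "smul c (x * y) = smul c x * y"
begin

lemma iter_mult: "int_iter \<Psi> k (x * y) = int_iter \<Psi> k x * int_iter \<Psi> k y"
  using algebra_automorphism_int_iter[OF automorphism] by (simp add: algebra_automorphism_def)

lemma iter_zero: "int_iter \<Psi> k 0 = 0"
  using algebra_automorphism_int_iter[OF automorphism] by (rule algebra_automorphism_zero)

lemma iter_mem: "x \<in> B \<Longrightarrow> int_iter \<Psi> k x \<in> B"
proof -
  interpret bijection \<Psi> using automorphism by (simp add: bijection_def algebra_automorphism_def)
  have "inv \<Psi> ` B \<subseteq> B"
    using image_eq by (metis image_inv_f_f image_mono inj order_refl)
  then have "int_iter \<Psi> k \<in> {g. g ` B \<subseteq> B}"
    using image_eq by (intro int_iter_closed) (auto simp: image_subset_iff)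
  then show "x \<in> B \<Longrightarrow> int_iter \<Psi> k x \<in> B" by blast
qed

lemma smul_zero: "smul c 0 = 0"
  using smul_mult[of c 0 0] by simp

lemma zero_intertwiner: "0 \<in> intertwiners \<Psi> B k"
  by (simp add: intertwiners_def zero_mem)

lemma intertwiners_zero_eq: "intertwiners \<Psi> B 0 = B"
  by (auto simp: intertwiners_def mult.commute)

lemma intertwiners_add:
  "x \<in> intertwiners \<Psi> B k \<Longrightarrow> y \<in> intertwiners \<Psi> B k \<Longrightarrow> x + y \<in> intertwiners \<Psi> B k"
  unfolding intertwiners_def by (simp add: add_mem distrib_left distrib_right)

lemma intertwiners_sum:
  assumes "finite S" "\<And>i. i \<in> S \<Longrightarrow> f i \<in> intertwiners \<Psi> B k"
  shows "sum f S \<in> intertwiners \<Psi> B k"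
  using assms
proof (induction S rule: finite_induct)
  case (insert i S)
  then show ?case by (simp add: intertwiners_add)
qed (simp add: zero_intertwiner)

lemma intertwiners_smul:
  assumes "x \<in> intertwiners \<Psi> B k"
  shows "smul c x \<in> intertwiners \<Psi> B k"
proof -
  have "smul c x * int_iter \<Psi> k b = b * smul c x" if "b \<in> B" for b
  proof -
    have "smul c x * int_iter \<Psi> k b = smul c (x * int_iter \<Psi> k b)" by (simp add: smul_mult)
    also have "\<dots> = smul c (x * b)" using assms that by (simp add: intertwiners_def mult.commute)
    also have "\<dots> = smul c x * b" by (rule smul_mult)
    finally show ?thesis by (metis mult.commute)
  qed
  with assms show ?thesis by (simp add: intertwiners_def smul_mem)
qed

lemma intertwiners_mult:
  assumes x: "x \<in> intertwiners \<Psi> B k" and y: "y \<in> intertwiners \<Psi> B m"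
  shows "x * int_iter \<Psi> k y \<in> intertwiners \<Psi> B (k + m)"
proof -
  have "x * int_iter \<Psi> k y * int_iter \<Psi> (k + m) b = b * (x * int_iter \<Psi> k y)" if b: "b \<in> B" for b
  proof -
    have "int_iter \<Psi> (k + m) b = int_iter \<Psi> k (int_iter \<Psi> m b)"
      using int_iter_add[of \<Psi> m k] automorphism by (simp add: algebra_automorphism_def add.commute)
    then have "x * int_iter \<Psi> k y * int_iter \<Psi> (k + m) b = x * int_iter \<Psi> k (y * int_iter \<Psi> m b)"
      by (simp add: iter_mult mult.assoc)
    also have "\<dots> = x * int_iter \<Psi> k b * int_iter \<Psi> k y"
      using y b by (simp add: intertwiners_def iter_mult mult.assoc)
    also have "\<dots> = b * (x * int_iter \<Psi> k y)"
      using x b by (simp add: intertwiners_def mult.assoc)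
    finally show ?thesis .
  qed
  with x y show ?thesis by (simp add: intertwiners_def mult_mem iter_mem)
qed

lemma cp_carrier_mult:
  assumes F: "F \<in> cp_carrier B" and G: "G \<in> cp_carrier B"
  shows "cp_mult \<Psi> F G \<in> cp_carrier B"
proof -
  have fin: "finite {n. F n \<noteq> 0}" "finite {n. G n \<noteq> 0}" and mem: "\<And>n. F n \<in> B" "\<And>n. G n \<in> B"
    using F G by (auto simp: cp_carrier_def)
  have "cp_mult \<Psi> F G k \<in> B" for k
    unfolding cp_mult_def using fin(1)
    by (induction rule: finite_induct) (simp_all add: zero_mem add_mem mult_mem iter_mem mem)
  moreover have "{k. cp_mult \<Psi> F G k \<noteq> 0} \<subseteq> (\<lambda>(n, m). n + m) ` ({n. F n \<noteq> 0} \<times> {n. G n \<noteq> 0})"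
  proof
    fix k assume "k \<in> {k. cp_mult \<Psi> F G k \<noteq> 0}"
    then obtain n where "F n \<noteq> 0" "F n * int_iter \<Psi> n (G (k - n)) \<noteq> 0"
      unfolding cp_mult_def by (auto elim: sum.not_neutral_contains_not_neutral)
    then show "k \<in> (\<lambda>(n, m). n + m) ` ({n. F n \<noteq> 0} \<times> {n. G n \<noteq> 0})"
      by (intro image_eqI[of _ _ "(n, k - n)"]) (auto simp: iter_zero)
  qed
  then have "finite {k. cp_mult \<Psi> F G k \<noteq> 0}"
    by (rule finite_subset) (simp add: fin)
  ultimately show ?thesis by (simp add: cp_carrier_def)
qed

lemma cp_commutant_mult:
  assumes F: "F \<in> cp_commutant \<Psi> B" and G: "G \<in> cp_commutant \<Psi> B"
  shows "cp_mult \<Psi> F G \<in> cp_commutant \<Psi> B"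
proof -
  have "cp_mult \<Psi> F G k \<in> intertwiners \<Psi> B k" for k
  proof -
    have "F n * int_iter \<Psi> n (G (k - n)) \<in> intertwiners \<Psi> B k" for n
      using intertwiners_mult[of "F n" n "G (k - n)" "k - n"] F G by (simp add: cp_commutant_def)
    moreover have "finite {n. F n \<noteq> 0}" using F by (simp add: cp_commutant_def cp_carrier_def)
    ultimately show ?thesis unfolding cp_mult_def by (intro intertwiners_sum)
  qed
  with F G show ?thesis by (simp add: cp_commutant_def cp_carrier_mult)
qed

lemma cp_commutant_abelian: "cp_abelian \<Psi> (cp_commutant \<Psi> B)"
  unfolding cp_abelian_def
proof (intro ballI ext)
  fix F G k assume F: "F \<in> cp_commutant \<Psi> B" and G: "G \<in> cp_commutant \<Psi> B"
  have mem: "\<And>n. F n \<in> B" "\<And>n. G n \<in> B" and fin: "finite {n. F n \<noteq> 0}" "finite {n. G n \<noteq> 0}"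
    and comm: "\<And>n b. b \<in> B \<Longrightarrow> F n * int_iter \<Psi> n b = b * F n"
      "\<And>n b. b \<in> B \<Longrightarrow> G n * int_iter \<Psi> n b = b * G n"
    using F G by (auto simp: cp_commutant_def cp_carrier_def intertwiners_def)
  define T where "T = {n. F n \<noteq> 0 \<and> G (k - n) \<noteq> 0}"
  have "cp_mult \<Psi> F G k = (\<Sum>n | F n \<noteq> 0. G (k - n) * F n)"
    unfolding cp_mult_def using comm(1) mem(2) by (intro sum.cong) auto
  also have "\<dots> = (\<Sum>n\<in>T. G (k - n) * F n)"
    unfolding T_def using fin(1) by (intro sum.mono_neutral_right) auto
  also have "\<dots> = (\<Sum>n | G n \<noteq> 0 \<and> F (k - n) \<noteq> 0. F (k - n) * G n)"
    by (rule sum.reindex_bij_witness[where i = "\<lambda>n. k - n" and j = "\<lambda>n. k - n"])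
       (auto simp: T_def mult.commute)
  also have "\<dots> = (\<Sum>n | G n \<noteq> 0. F (k - n) * G n)"
    using fin(2) by (intro sum.mono_neutral_left) auto
  also have "\<dots> = cp_mult \<Psi> G F k"
    unfolding cp_mult_def using comm(2) mem(1) by (intro sum.cong) auto
  finally show "cp_mult \<Psi> F G k = cp_mult \<Psi> G F k" .
qed

lemma cp_commutant_subalgebra: "cp_subalgebra smul \<Psi> B (cp_commutant \<Psi> B)"
  unfolding cp_subalgebra_def
proof (intro conjI ballI allI)
  show "cp_commutant \<Psi> B \<subseteq> cp_carrier B" by (auto simp: cp_commutant_def)
  show "(\<lambda>_. 0) \<in> cp_commutant \<Psi> B"
    by (simp add: cp_commutant_def cp_carrier_def zero_mem zero_intertwiner)
  fix F G assume F: "F \<in> cp_commutant \<Psi> B" and G: "G \<in> cp_commutant \<Psi> B"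
  show "cp_mult \<Psi> F G \<in> cp_commutant \<Psi> B" by (rule cp_commutant_mult[OF F G])
  have "{n. F n + G n \<noteq> 0} \<subseteq> {n. F n \<noteq> 0} \<union> {n. G n \<noteq> 0}" by auto
  with F G show "cp_add F G \<in> cp_commutant \<Psi> B"
    by (auto simp: cp_commutant_def cp_carrier_def cp_add_def add_mem intertwiners_add
        intro: finite_subset)
next
  fix c F assume F: "F \<in> cp_commutant \<Psi> B"
  have "{n. smul c (F n) \<noteq> 0} \<subseteq> {n. F n \<noteq> 0}" using smul_zero by auto
  with F show "cp_smul smul c F \<in> cp_commutant \<Psi> B"
    by (auto simp: cp_commutant_def cp_carrier_def cp_smul_def smul_mem intertwiners_smul
        intro: finite_subset)
qed

lemma cp_emb_mem_cp_commutant: "b \<in> B \<Longrightarrow> cp_emb b \<in> cp_commutant \<Psi> B"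
proof -
  assume b: "b \<in> B"
  have "{n. cp_emb b n \<noteq> 0} \<subseteq> {0}" by (auto simp: cp_emb_def)
  with b show ?thesis
    by (auto simp: cp_commutant_def cp_carrier_def cp_emb_def zero_mem zero_intertwiner
        intertwiners_zero_eq intro: finite_subset)
qed

lemma cp_emb_subalgebra: "cp_subalgebra smul \<Psi> B (cp_emb ` B)"
  unfolding cp_subalgebra_def
proof (intro conjI ballI allI)
  show "cp_emb ` B \<subseteq> cp_carrier B"
    using cp_emb_mem_cp_commutant by (auto simp: cp_commutant_def)
  show "(\<lambda>_. 0) \<in> cp_emb ` B"
    using zero_mem by (intro image_eqI[of _ _ 0]) (auto simp: cp_emb_def)
  fix F G assume "F \<in> cp_emb ` B" "G \<in> cp_emb ` B"
  then obtain x y where xy: "x \<in> B" "y \<in> B" "F = cp_emb x" "G = cp_emb y" by auto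
  have "cp_mult \<Psi> F G = cp_emb (x * y)" "cp_add F G = cp_emb (x + y)"
    unfolding xy cp_mult_emb_left by (simp_all add: cp_add_def cp_emb_def fun_eq_iff)
  with xy show "cp_mult \<Psi> F G \<in> cp_emb ` B" "cp_add F G \<in> cp_emb ` B"
    by (simp_all add: mult_mem add_mem)
next
  fix c F assume "F \<in> cp_emb ` B"
  then obtain x where x: "x \<in> B" "F = cp_emb x" by auto
  have "cp_smul smul c F = cp_emb (smul c x)"
    by (auto simp: x cp_smul_def cp_emb_def smul_zero)
  with x show "cp_smul smul c F \<in> cp_emb ` B" by (simp add: smul_mem)
qed

lemma cp_commutant_iff:
  "F \<in> cp_commutant \<Psi> B \<longleftrightarrow>
     F \<in> cp_carrier B \<and> (\<forall>b\<in>B. cp_mult \<Psi> F (cp_emb b) = cp_mult \<Psi> (cp_emb b) F)"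
proof (cases "F \<in> cp_carrier B")
  case True
  then have fin: "finite {n. F n \<noteq> 0}" and mem: "\<And>n. F n \<in> B" by (auto simp: cp_carrier_def)
  have "cp_mult \<Psi> F (cp_emb b) = cp_mult \<Psi> (cp_emb b) F \<longleftrightarrow>
      (\<forall>k. F k * int_iter \<Psi> k b = b * F k)" for b
    using fin by (simp add: cp_mult_emb_left cp_mult_emb_right iter_zero fun_eq_iff)
  moreover have "F \<in> cp_commutant \<Psi> B \<longleftrightarrow> (\<forall>k. \<forall>b\<in>B. F k * int_iter \<Psi> k b = b * F k)"
    using True mem by (simp add: cp_commutant_def intertwiners_def)
  ultimately show ?thesis using True by blast
qed (simp add: cp_commutant_def)

lemma maximal_abelian_iff_cp_commutant:
  "cp_maximal_abelian smul \<Psi> B (cp_emb ` B) \<longleftrightarrow> cp_commutant \<Psi> B = cp_emb ` B"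
proof
  assume "cp_maximal_abelian smul \<Psi> B (cp_emb ` B)"
  then have "\<And>E. cp_subalgebra smul \<Psi> B E \<Longrightarrow> cp_abelian \<Psi> E \<Longrightarrow> cp_emb ` B \<subseteq> E \<Longrightarrow>
      E = cp_emb ` B"
    by (simp add: cp_maximal_abelian_def)
  from this[OF cp_commutant_subalgebra cp_commutant_abelian
      image_subsetI[OF cp_emb_mem_cp_commutant]]
  show "cp_commutant \<Psi> B = cp_emb ` B" .
next
  assume eq: "cp_commutant \<Psi> B = cp_emb ` B"
  have "F \<in> cp_commutant \<Psi> B"
    if E: "cp_subalgebra smul \<Psi> B E" "cp_abelian \<Psi> E" "cp_emb ` B \<subseteq> E" and F: "F \<in> E" for E F
  proof -
    have "F \<in> cp_carrier B" using E(1) F by (auto simp: cp_subalgebra_def)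
    moreover have "cp_mult \<Psi> F (cp_emb b) = cp_mult \<Psi> (cp_emb b) F" if "b \<in> B" for b
      using E(2,3) F that by (auto simp: cp_abelian_def)
    ultimately show ?thesis by (simp add: cp_commutant_iff)
  qed
  with eq have "E = cp_emb ` B"
    if "cp_subalgebra smul \<Psi> B E" "cp_abelian \<Psi> E" "cp_emb ` B \<subseteq> E" for E
    using that by blast
  moreover have "cp_abelian \<Psi> (cp_emb ` B)"
    using eq cp_commutant_abelian by simp
  ultimately show "cp_maximal_abelian smul \<Psi> B (cp_emb ` B)"
    by (simp add: cp_maximal_abelian_def cp_emb_subalgebra)
qed

lemma cp_commutant_eq_cp_emb_iff:
  "cp_commutant \<Psi> B = cp_emb ` B \<longleftrightarrow> (\<forall>k. k \<noteq> 0 \<longrightarrow> intertwiners \<Psi> B k = {0})"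
proof
  assume eq: "cp_commutant \<Psi> B = cp_emb ` B"
  show "\<forall>k. k \<noteq> 0 \<longrightarrow> intertwiners \<Psi> B k = {0}"
  proof (intro allI impI equalityI subsetI)
    fix k x assume k: "k \<noteq> 0" and x: "x \<in> intertwiners \<Psi> B k"
    define F where "F = (\<lambda>n. if n = k then x else 0)"
    have "F n \<in> intertwiners \<Psi> B n" "F n \<in> B" for n
      using x by (simp_all add: F_def zero_intertwiner zero_mem intertwiners_def)
    moreover have "finite {n. F n \<noteq> 0}"
      by (rule finite_subset[of _ "{k}"]) (auto simp: F_def)
    ultimately have "F \<in> cp_commutant \<Psi> B" by (simp add: cp_commutant_def cp_carrier_def)
    with eq obtain y where "F = cp_emb y" by auto
    with k have "F k = 0" by (simp add: cp_emb_def)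
    then show "x \<in> {0}" by (simp add: F_def)
  qed (simp add: zero_intertwiner)
next
  assume triv: "\<forall>k. k \<noteq> 0 \<longrightarrow> intertwiners \<Psi> B k = {0}"
  have "F \<in> cp_emb ` B" if F: "F \<in> cp_commutant \<Psi> B" for F
  proof
    show "F = cp_emb (F 0)"
      using F triv by (auto simp: cp_commutant_def cp_emb_def fun_eq_iff)
    show "F 0 \<in> B" using F by (simp add: cp_commutant_def cp_carrier_def)
  qed
  with cp_emb_mem_cp_commutant show "cp_commutant \<Psi> B = cp_emb ` B" by blast
qed

theorem maximal_abelian_iff_intertwiners:
  "cp_maximal_abelian smul \<Psi> B (cp_emb ` B) \<longleftrightarrow> (\<forall>k. k \<noteq> 0 \<longrightarrow> intertwiners \<Psi> B k = {0})"
  by (simp add: maximal_abelian_iff_cp_commutant cp_commutant_eq_cp_emb_iff)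

end

section \<open>The Gelfand topology\<close>

lemma continuous_map_mult [continuous_intros]:
  fixes f g :: "'x \<Rightarrow> 'b::real_normed_algebra"
  shows "continuous_map X euclidean f \<Longrightarrow> continuous_map X euclidean g \<Longrightarrow>
    continuous_map X euclidean (\<lambda>x. f x * g x)"
  by (simp add: continuous_map_atin tendsto_mult)

lemma closedin_equalizer:
  assumes "Hausdorff_space Y" "\<And>i. continuous_map X Y (f i)" "\<And>i. continuous_map X Y (g i)"
  shows "closedin X {x \<in> topspace X. \<forall>i. f i x = g i x}"
proof -
  have "{x \<in> topspace X. \<forall>i. f i x = g i x} = \<Inter> (range (\<lambda>i. {x \<in> topspace X. f i x = g i x}))"
    by auto
  then show ?thesis
    using closedin_continuous_maps_eq[OF assms(1) assms(2,3)] by (auto intro!: closedin_Inter)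
qed

lemma locally_compact_regular_open_in_compact:
  assumes "Hausdorff_space X" "compactin X K" "openin X W" "W \<subseteq> K"
  shows "locally_compact_space (subtopology X W) \<and> regular_space (subtopology X W)"
proof -
  let ?K = "subtopology X K"
  have K: "compact_space ?K" "Hausdorff_space ?K"
    using assms(1,2) by (simp_all add: compact_space_subtopology Hausdorff_space_subtopology)
  have "openin ?K W" "subtopology ?K W = subtopology X W"
    using assms(3,4) by (auto simp: openin_subtopology_alt subtopology_subtopology Int_absorb1)
  then show ?thesis
    using K locally_compact_space_open_subset[of ?K W] compact_imp_locally_compact_space
      regular_space_subtopology[OF compact_Hausdorff_imp_regular_space[OF K]]
    by metis
qed

lemma Baire_category_cover:
  assumes "locally_compact_space X" "regular_space X" "topspace X \<noteq> {}" "countable I"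
    and closed: "\<And>i. i \<in> I \<Longrightarrow> closedin X (P i)" and cover: "topspace X \<subseteq> (\<Union>i\<in>I. P i)"
  obtains i where "i \<in> I" "X interior_of P i \<noteq> {}"
proof (rule ccontr)
  assume "\<not> thesis"
  with that closed have "\<And>T. T \<in> P ` I \<Longrightarrow> closedin X T \<and> X interior_of T = {}" by blast
  with assms(1,2,4) have "X interior_of (\<Union>i\<in>I. P i) = {}"
    by (intro Baire_category_alt) auto
  moreover have "(\<Union>i\<in>I. P i) = topspace X"
    using closed cover by (auto dest: closedin_subset)
  ultimately show False using assms(3) by simp
qed

context
  fixes smul :: "complex \<Rightarrow> 'a::comm_ring \<Rightarrow> 'a"
begin

lemma topspace_gelfand_topology [simp]: "topspace (gelfand_topology smul) = characters smul"
  unfolding gelfand_topology_def topology_generated_by_topspace by (auto intro!: exI[of _ UNIV])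

lemma openin_gelfand_topology_basic:
  "open U \<Longrightarrow> openin (gelfand_topology smul) {\<mu> \<in> characters smul. \<mu> a \<in> U}"
  unfolding gelfand_topology_def by (rule topology_generated_by_Basis) blast

lemma continuous_map_character_eval: "continuous_map (gelfand_topology smul) euclidean (\<lambda>\<mu>. \<mu> a)"
  using openin_gelfand_topology_basic by (auto simp: continuous_map_def open_openin[symmetric])

lemma openin_characters_norm_gt:
  "openin (gelfand_topology smul) {\<mu> \<in> characters smul. r < cmod (\<mu> a)}"
proof -
  have "openin (gelfand_topology smul) {\<mu> \<in> topspace (gelfand_topology smul). cmod (\<mu> a) \<in> {r<..}}"
    by (rule openin_continuous_map_preimage[where Y = euclidean])
       (simp_all add: continuous_map_norm continuous_map_character_eval)
  then show ?thesis by simp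
qed

lemma gelfand_topology_eq_subtopology:
  "gelfand_topology smul = subtopology (product_topology (\<lambda>_. euclidean) UNIV) (characters smul)"
proof -
  let ?P = "product_topology (\<lambda>_::'a. euclidean :: complex topology) UNIV"
  have "continuous_map (gelfand_topology smul) (subtopology ?P (characters smul)) id"
    by (simp add: continuous_map_in_subtopology continuous_map_componentwise_UNIV
        continuous_map_character_eval)
  moreover have "continuous_map (subtopology ?P (characters smul)) (gelfand_topology smul) id"
    unfolding gelfand_topology_def
  proof (rule continuous_on_generated_topo)
    fix U assume "U \<in> {{\<mu> \<in> characters smul. \<mu> a \<in> V} |a V. open V}"
    then obtain a V where "open V" and U: "U = characters smul \<inter> {\<mu>. \<mu> a \<in> V}" by blast
    have "openin ?P {\<mu> \<in> topspace ?P. \<mu> a \<in> V}"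
      by (rule openin_continuous_map_preimage[OF continuous_map_product_projection])
         (simp_all add: \<open>open V\<close>)
    then have "openin (subtopology ?P (characters smul)) U"
      unfolding U by (simp add: openin_subtopology_Int2)
    moreover have "id -` U \<inter> topspace (subtopology ?P (characters smul)) = U" by (auto simp: U)
    ultimately show "openin (subtopology ?P (characters smul))
        (id -` U \<inter> topspace (subtopology ?P (characters smul)))"
      by simp
  qed (auto intro!: exI[of _ UNIV])
  ultimately have "homeomorphic_map (gelfand_topology smul) (subtopology ?P (characters smul)) id"
    by (auto simp: homeomorphic_map_maps homeomorphic_maps_def)
  then show ?thesis by simp
qed

lemma Hausdorff_space_gelfand_topology: "Hausdorff_space (gelfand_topology smul)"
  unfolding gelfand_topology_eq_subtopology
  by (rule Hausdorff_space_subtopology)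
     (metis Hausdorff_space_euclidean Hausdorff_space_product_topology)

lemma completely_regular_bump:
  assumes "completely_regular smul" "openin (gelfand_topology smul) U" "\<psi> \<in> U"
  obtains b where "\<psi> b \<noteq> 0" "\<And>\<mu>. \<mu> \<in> characters smul \<Longrightarrow> \<mu> b \<noteq> 0 \<Longrightarrow> \<mu> \<in> U"
proof -
  have "\<psi> \<in> characters smul" using openin_subset[OF assms(2)] assms(3) by auto
  moreover have "closedin (gelfand_topology smul) (characters smul - U)"
    using closedin_diff[OF closedin_topspace assms(2)] by simp
  ultimately obtain b where "\<forall>\<mu>\<in>characters smul - U. \<mu> b = 0" "\<psi> b \<noteq> 0"
    using assms(1,3) unfolding completely_regular_def by blast
  with that show thesis by blast
qed

lemma closedin_fixed_characters:
  "closedin (gelfand_topology smul) {\<mu> \<in> characters smul. \<mu> \<circ> g = \<mu>}"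
  using closedin_equalizer[of euclidean "gelfand_topology smul" "\<lambda>b \<mu>. \<mu> (g b)" "\<lambda>b \<mu>. \<mu> b"]
  by (simp add: continuous_map_character_eval fun_eq_iff)

end

context
  fixes smul :: "complex \<Rightarrow> 'a::{comm_ring,real_normed_algebra,banach} \<Rightarrow> 'a"
  assumes scalar: "complex_banach_scalar smul"
begin

lemma character_norm_le:
  assumes \<mu>: "\<mu> \<in> characters smul"
  shows "cmod (\<mu> x) \<le> norm x"
proof (rule ccontr)
  assume "\<not> ?thesis"
  then have less: "norm x < cmod (\<mu> x)" and nz: "\<mu> x \<noteq> 0" by auto
  define y where "y = smul (1 / \<mu> x) x"
  have norm_y: "norm y < 1"
    using scalar less nz by (simp add: y_def complex_banach_scalar_def norm_divide divide_less_eq)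
  have \<mu>_y: "\<mu> y = 1" using nz by (simp add: y_def character_smul[OF \<mu>])
  \<comment> \<open>Without a unit, \<open>s = \<Sum>\<^sub>n y\<^bsup>n+1\<^esup>\<close> stands in for \<open>(1 - y)\<^sup>-\<^sup>1 - 1\<close>: it
    satisfies \<open>s = y s + y\<close>, whence \<open>\<mu> s = \<mu> s + 1\<close>.\<close>
  define p where "p n = ((*) y ^^ n) y" for n
  have p_0: "p 0 = y" and p_Suc: "p (Suc n) = y * p n" for n by (simp_all add: p_def)
  have norm_p: "norm (p n) \<le> norm y ^ Suc n" for n
  proof (induction n)
    case (Suc n)
    have "norm (p (Suc n)) \<le> norm y * norm (p n)" by (simp add: p_Suc norm_mult_ineq)
    also have "\<dots> \<le> norm y * norm y ^ Suc n" using Suc by (simp add: mult_left_mono)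
    finally show ?case by simp
  qed (simp add: p_0)
  have "summable (\<lambda>n. norm y ^ Suc n)"
    using norm_y by (simp add: summable_mult summable_geometric)
  then have "summable p" using norm_p by (rule summable_comparison_test'[where N = 0])
  then have sums: "p sums suminf p" by (rule summable_sums)
  then have "(\<lambda>n. p (Suc n)) sums (y * suminf p)" by (simp add: p_Suc sums_mult)
  then have "p sums (y * suminf p + y)" by (simp add: sums_Suc_iff p_0)
  with sums have "suminf p = y * suminf p + y" by (rule sums_unique2)
  then have "\<mu> (suminf p) = \<mu> y * \<mu> (suminf p) + \<mu> y"
    by (metis character_add[OF \<mu>] character_mult[OF \<mu>])
  with \<mu>_y show False by simp
qed

lemma compactin_characters_norm_ge:
  assumes "0 < \<epsilon>"
  shows "compactin (gelfand_topology smul) {\<mu> \<in> characters smul. \<epsilon> \<le> cmod (\<mu> a)}"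
proof -
  let ?P = "product_topology (\<lambda>_::'a. euclidean :: complex topology) UNIV"
  let ?K = "{\<mu> \<in> characters smul. \<epsilon> \<le> cmod (\<mu> a)}"
  have eval: "continuous_map ?P euclidean (\<lambda>\<mu>. \<mu> b)" for b
    by (rule continuous_map_product_projection) simp
  have add: "closedin ?P {\<mu> \<in> topspace ?P. \<forall>p::'a \<times> 'a. \<mu> (fst p + snd p) = \<mu> (fst p) + \<mu> (snd p)}"
    by (rule closedin_equalizer[where Y = euclidean]) (simp_all add: eval continuous_intros)
  have smul:
    "closedin ?P {\<mu> \<in> topspace ?P. \<forall>p::complex \<times> 'a. \<mu> (smul (fst p) (snd p)) = fst p * \<mu> (snd p)}"
    by (rule closedin_equalizer[where Y = euclidean]) (simp_all add: eval continuous_intros)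
  have mult: "closedin ?P {\<mu> \<in> topspace ?P. \<forall>p::'a \<times> 'a. \<mu> (fst p * snd p) = \<mu> (fst p) * \<mu> (snd p)}"
    by (rule closedin_equalizer[where Y = euclidean]) (simp_all add: eval continuous_intros)
  have norm: "closedin ?P {\<mu> \<in> topspace ?P. cmod (\<mu> a) \<in> {\<epsilon>..}}"
    by (rule closedin_continuous_map_preimage[where Y = euclidean])
       (simp_all add: eval continuous_intros)
  have K_eq: "?K = {\<mu> \<in> topspace ?P. \<forall>p::'a \<times> 'a. \<mu> (fst p + snd p) = \<mu> (fst p) + \<mu> (snd p)} \<inter>
      {\<mu> \<in> topspace ?P. \<forall>p::complex \<times> 'a. \<mu> (smul (fst p) (snd p)) = fst p * \<mu> (snd p)} \<inter>
      {\<mu> \<in> topspace ?P. \<forall>p::'a \<times> 'a. \<mu> (fst p * snd p) = \<mu> (fst p) * \<mu> (snd p)} \<inter>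
      {\<mu> \<in> topspace ?P. cmod (\<mu> a) \<in> {\<epsilon>..}}"
  proof -
    have "\<mu> \<noteq> (\<lambda>_. 0)" if "\<epsilon> \<le> cmod (\<mu> a)" for \<mu> :: "'a \<Rightarrow> complex"
      using assms that by auto
    with assms show ?thesis by (auto simp: characters_def)
  qed
  have "compactin ?P (\<Pi>\<^sub>E x\<in>UNIV. cball 0 (norm x))"
    by (simp add: compactin_PiE)
  moreover have "?K \<subseteq> (\<Pi>\<^sub>E x\<in>UNIV. cball 0 (norm x))"
    by (intro subsetI PiE_I) (simp_all add: character_norm_le)
  moreover have "closedin ?P ?K" unfolding K_eq by (intro closedin_Int add smul mult norm)
  ultimately have "compactin ?P ?K" by (rule closed_compactin)
  then show ?thesis by (simp add: gelfand_topology_eq_subtopology compactin_subtopology)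
qed

lemma locally_compact_regular_characters_norm_gt:
  assumes "0 < \<epsilon>"
  shows
    "locally_compact_space (subtopology (gelfand_topology smul) {\<mu> \<in> characters smul. \<epsilon> < cmod (\<mu> a)})
     \<and> regular_space (subtopology (gelfand_topology smul) {\<mu> \<in> characters smul. \<epsilon> < cmod (\<mu> a)})"
proof (rule locally_compact_regular_open_in_compact)
  show "compactin (gelfand_topology smul) {\<mu> \<in> characters smul. \<epsilon> \<le> cmod (\<mu> a)}"
    using assms by (rule compactin_characters_norm_ge)
qed (auto simp: Hausdorff_space_gelfand_topology openin_characters_norm_gt)

end

section \<open>Density of non-periodic points\<close>

context
  fixes smul :: "complex \<Rightarrow> 'a::comm_ring \<Rightarrow> 'a" and g :: "'i \<Rightarrow> 'a \<Rightarrow> 'a" and I :: "'i set"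
begin

lemma dense_unfixed_charactersD:
  assumes "semisimple smul"
    and dense: "gelfand_topology smul closure_of {\<mu> \<in> characters smul. \<forall>i\<in>I. \<mu> \<circ> g i \<noteq> \<mu>}
      = characters smul"
    and "i \<in> I" and fixed: "\<And>\<mu>. \<mu> \<in> characters smul \<Longrightarrow> \<mu> x \<noteq> 0 \<Longrightarrow> \<mu> \<circ> g i = \<mu>"
  shows "x = 0"
proof -
  let ?U = "{\<mu> \<in> characters smul. \<mu> x \<in> - {0}}"
  have "openin (gelfand_topology smul) ?U"
    by (rule openin_gelfand_topology_basic) (simp add: open_Compl)
  moreover have "{\<mu> \<in> characters smul. \<forall>i\<in>I. \<mu> \<circ> g i \<noteq> \<mu>} \<inter> ?U = {}"
    using fixed \<open>i \<in> I\<close> by auto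
  moreover have "\<forall>T. openin (gelfand_topology smul) T \<and> T \<noteq> {} \<longrightarrow>
      {\<mu> \<in> characters smul. \<forall>i\<in>I. \<mu> \<circ> g i \<noteq> \<mu>} \<inter> T \<noteq> {}"
    using dense by (simp only: dense_intersects_open [symmetric] topspace_gelfand_topology)
  ultimately have "?U = {}" by blast
  then show "x = 0"
    by (intro semisimple_eqI[OF assms(1)]) (auto simp: character_zero)
qed

end

context
  fixes smul :: "complex \<Rightarrow> 'a::{comm_ring,real_normed_algebra,banach} \<Rightarrow> 'a"
    and g :: "'i \<Rightarrow> 'a \<Rightarrow> 'a" and I :: "'i set"
  assumes scalar: "complex_banach_scalar smul" and regular: "completely_regular smul"
    and "countable I"
begin

lemma dense_unfixed_charactersI:
  assumes vanishing: "\<And>i x. i \<in> I \<Longrightarrow>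
    (\<And>\<mu>. \<mu> \<in> characters smul \<Longrightarrow> \<mu> x \<noteq> 0 \<Longrightarrow> \<mu> \<circ> g i = \<mu>) \<Longrightarrow> x = 0"
  shows "gelfand_topology smul closure_of {\<mu> \<in> characters smul. \<forall>i\<in>I. \<mu> \<circ> g i \<noteq> \<mu>}
    = characters smul" (is "?X closure_of ?N = _")
proof -
  have "?N \<inter> V \<noteq> {}" if V: "openin ?X V" "V \<noteq> {}" for V
  proof
    assume disjoint: "?N \<inter> V = {}"
    obtain \<phi> where "\<phi> \<in> V" using V(2) by blast
    obtain a where a: "\<phi> a \<noteq> 0" "\<And>\<mu>. \<mu> \<in> characters smul \<Longrightarrow> \<mu> a \<noteq> 0 \<Longrightarrow> \<mu> \<in> V"
      using completely_regular_bump[OF regular V(1) \<open>\<phi> \<in> V\<close>] by blast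
    define W where "W = {\<mu> \<in> characters smul. cmod (\<phi> a) / 2 < cmod (\<mu> a)}"
    \<comment> \<open>\<open>W\<close> is locally compact and covered by the closed sets of characters fixed by some \<open>g i\<close>,
      so by Baire one of them has interior in \<open>W\<close>, which is also open in \<open>\<Delta>(A)\<close>.\<close>
    let ?F = "\<lambda>i. {\<mu> \<in> W. \<mu> \<circ> g i = \<mu>}"
    have cover: "topspace (subtopology ?X W) \<subseteq> (\<Union>i\<in>I. ?F i)"
      using a(2) disjoint by (fastforce simp: W_def)
    have closed: "closedin (subtopology ?X W) (?F i)" for i
    proof -
      have "?F i = W \<inter> {\<mu> \<in> characters smul. \<mu> \<circ> g i = \<mu>}" by (auto simp: W_def)
      then show ?thesis by (simp add: closedin_subtopology_Int_closed closedin_fixed_characters)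
    qed
    have "\<phi> \<in> topspace (subtopology ?X W)"
      using V(1) \<open>\<phi> \<in> V\<close> a(1) openin_subset by (fastforce simp: W_def)
    then have nonempty: "topspace (subtopology ?X W) \<noteq> {}" by blast
    have "locally_compact_space (subtopology ?X W) \<and> regular_space (subtopology ?X W)"
      unfolding W_def using a(1)
      by (intro locally_compact_regular_characters_norm_gt[OF scalar]) simp
    then obtain i where "i \<in> I" and interior: "subtopology ?X W interior_of ?F i \<noteq> {}"
      using Baire_category_cover[of "subtopology ?X W" I ?F] nonempty closed cover \<open>countable I\<close>
      by blast
    then obtain \<psi> where \<psi>: "\<psi> \<in> subtopology ?X W interior_of ?F i" by blast
    have "openin ?X (subtopology ?X W interior_of ?F i)"
      using openin_characters_norm_gt unfolding W_def
      by (rule openin_trans_full[OF openin_interior_of])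
    then obtain b where b: "\<psi> b \<noteq> 0"
      "\<And>\<mu>. \<mu> \<in> characters smul \<Longrightarrow> \<mu> b \<noteq> 0 \<Longrightarrow> \<mu> \<in> subtopology ?X W interior_of ?F i"
      using completely_regular_bump[OF regular _ \<psi>] by blast
    have "b = 0"
      using vanishing[OF \<open>i \<in> I\<close>] b(2) interior_of_subset[of "subtopology ?X W" "?F i"] by blast
    moreover have "\<psi> \<in> characters smul"
      using \<psi> interior_of_subset[of "subtopology ?X W" "?F i"] by (auto simp: W_def)
    ultimately show False using b(1) by (simp add: character_zero)
  qed
  then show ?thesis using dense_intersects_open[of ?X ?N] by auto
qed

end

lemma nonperiodic_points_eq:
  assumes "bij st"
  shows "nonperiodic_points smul st =
    {\<mu> \<in> characters smul. \<forall>k. k \<noteq> 0 \<longrightarrow> \<mu> \<circ> int_iter st k \<noteq> \<mu>}"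
proof -
  have "(\<forall>n::int. n \<noteq> 0 \<longrightarrow> \<mu> \<circ> int_iter st (- n) \<noteq> \<mu>) \<longleftrightarrow>
      (\<forall>k. k \<noteq> 0 \<longrightarrow> \<mu> \<circ> int_iter st k \<noteq> \<mu>)" for \<mu> :: "'a \<Rightarrow> complex"
    by (metis minus_minus neg_equal_0_iff_equal)
  then show ?thesis
    by (simp add: nonperiodic_points_def int_iter_char_map[OF assms])
qed

context
  fixes smul :: "complex \<Rightarrow> 'a::comm_ring \<Rightarrow> 'a"
  assumes semisimple: "semisimple smul"
begin

lemma gelfand_eq_iff: "gelfand smul x = gelfand smul y \<longleftrightarrow> x = y"
  using semisimple by (auto simp: semisimple_def inj_eq)

lemma gelfand_image_eq_zero_iff: "gelfand smul ` S = {0} \<longleftrightarrow> S = {0}"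
  using inj_image_eq_iff[of "gelfand smul" S "{0}"] semisimple
  by (simp add: semisimple_def gelfand_zero)

lemma intertwiners_iff_characters:
  "x \<in> intertwiners \<Psi> UNIV k \<longleftrightarrow>
    (\<forall>\<mu>\<in>characters smul. \<mu> x \<noteq> 0 \<longrightarrow> \<mu> \<circ> int_iter \<Psi> k = \<mu>)"
proof
  assume x: "x \<in> intertwiners \<Psi> UNIV k"
  show "\<forall>\<mu>\<in>characters smul. \<mu> x \<noteq> 0 \<longrightarrow> \<mu> \<circ> int_iter \<Psi> k = \<mu>"
  proof (intro ballI impI ext)
    fix \<mu> b assume \<mu>: "\<mu> \<in> characters smul" and "\<mu> x \<noteq> 0"
    moreover have "\<mu> x * \<mu> (int_iter \<Psi> k b) = \<mu> b * \<mu> x"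
      using x by (simp add: intertwiners_def flip: character_mult[OF \<mu>])
    ultimately show "(\<mu> \<circ> int_iter \<Psi> k) b = \<mu> b" by (simp add: mult.commute)
  qed
next
  assume fixed: "\<forall>\<mu>\<in>characters smul. \<mu> x \<noteq> 0 \<longrightarrow> \<mu> \<circ> int_iter \<Psi> k = \<mu>"
  have "x * int_iter \<Psi> k b = b * x" for b
    by (rule semisimple_eqI[OF semisimple])
       (use fixed in \<open>auto simp: character_mult mult.commute fun_eq_iff\<close>)
  then show "x \<in> intertwiners \<Psi> UNIV k" by (simp add: intertwiners_def)
qed

lemma intertwiners_gelfand:
  assumes "algebra_automorphism smul st"
  shows "intertwiners (hat_map st) (range (gelfand smul)) k = gelfand smul ` intertwiners st UNIV k"
proof -
  have bij: "bij st" using assms by (simp add: algebra_automorphism_def)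
  have "gelfand smul \<circ> st = hat_map st \<circ> gelfand smul"
    by (simp add: fun_eq_iff hat_map_gelfand[OF assms])
  then have "int_iter (hat_map st) k (gelfand smul b) = gelfand smul (int_iter st k b)" for b
    using int_iter_semiconj[OF bij bij_hat_map[OF bij], of "gelfand smul" k]
    by (simp add: fun_eq_iff)
  then show ?thesis
    by (auto simp: intertwiners_def gelfand_eq_iff simp flip: gelfand_mult)
qed

end

lemma invariant_subalgebra_UNIV:
  assumes "complex_banach_scalar smul" "algebra_automorphism smul st"
  shows "invariant_subalgebra smul st UNIV"
  using assms
  by unfold_locales (auto simp: complex_banach_scalar_def algebra_automorphism_def bij_is_surj)

lemma invariant_subalgebra_gelfand:
  assumes "algebra_automorphism smul st"
  shows "invariant_subalgebra (\<lambda>c f \<mu>. c * f \<mu>) (hat_map st) (range (gelfand smul))"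
proof
  have "bij st" using assms by (simp add: algebra_automorphism_def)
  then show "algebra_automorphism (\<lambda>c f \<mu>. c * f \<mu>) (hat_map st)"
    by (rule algebra_automorphism_hat_map)
  have "range (gelfand smul \<circ> st) = range (gelfand smul)"
    using \<open>bij st\<close> by (metis bij_is_surj image_comp)
  then show "hat_map st ` range (gelfand smul) = range (gelfand smul)"
    by (simp add: image_image hat_map_gelfand[OF assms])
  show "0 \<in> range (gelfand smul)" by (metis gelfand_zero rangeI)
  fix x y c assume "x \<in> range (gelfand smul)" "y \<in> range (gelfand smul)"
  then show "x + y \<in> range (gelfand smul)" "x * y \<in> range (gelfand smul)"
    "(\<lambda>\<mu>. c * x \<mu>) \<in> range (gelfand smul)"
    by (auto simp flip: gelfand_add gelfand_mult gelfand_smul)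
next
  fix c and x y :: "('a \<Rightarrow> complex) \<Rightarrow> complex"
  show "(\<lambda>\<mu>. c * (x * y) \<mu>) = (\<lambda>\<mu>. c * x \<mu>) * y" by (simp add: fun_eq_iff)
qed

lemma dense_nonperiodic_points_iff:
  fixes smul :: "complex \<Rightarrow> 'a::{comm_ring,real_normed_algebra,banach} \<Rightarrow> 'a"
  assumes "complex_banach_scalar smul" "completely_regular smul" "semisimple smul" "bij st"
  shows "gelfand_topology smul closure_of nonperiodic_points smul st = characters smul \<longleftrightarrow>
    (\<forall>k. k \<noteq> 0 \<longrightarrow> intertwiners st UNIV k = {0})"
proof -
  let ?I = "{k::int. k \<noteq> 0}"
  have N: "nonperiodic_points smul st = {\<mu> \<in> characters smul. \<forall>k\<in>?I. \<mu> \<circ> int_iter st k \<noteq> \<mu>}"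
    using nonperiodic_points_eq[OF assms(4)] by simp
  have trivial: "intertwiners st UNIV k = {0} \<longleftrightarrow>
      (\<forall>x. (\<forall>\<mu>\<in>characters smul. \<mu> x \<noteq> 0 \<longrightarrow> \<mu> \<circ> int_iter st k = \<mu>) \<longrightarrow> x = 0)" for k
    using intertwiners_iff_characters[OF assms(3)] by (auto simp: intertwiners_def character_zero)
  have "countable ?I" by (rule countable_subset[OF subset_UNIV]) simp
  show ?thesis
    unfolding N trivial
  proof (intro iffI allI impI)
    fix k x
    assume dense: "gelfand_topology smul closure_of
        {\<mu> \<in> characters smul. \<forall>k\<in>?I. \<mu> \<circ> int_iter st k \<noteq> \<mu>} = characters smul"
      and "k \<noteq> 0" and fixed: "\<forall>\<mu>\<in>characters smul. \<mu> x \<noteq> 0 \<longrightarrow> \<mu> \<circ> int_iter st k = \<mu>"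
    show "x = 0"
      by (rule dense_unfixed_charactersD[OF assms(3) dense, where i = k])
         (use \<open>k \<noteq> 0\<close> fixed in auto)
  next
    assume "\<forall>k. k \<noteq> 0 \<longrightarrow>
      (\<forall>x. (\<forall>\<mu>\<in>characters smul. \<mu> x \<noteq> 0 \<longrightarrow> \<mu> \<circ> int_iter st k = \<mu>) \<longrightarrow> x = 0)"
    then show "gelfand_topology smul closure_of
        {\<mu> \<in> characters smul. \<forall>k\<in>?I. \<mu> \<circ> int_iter st k \<noteq> \<mu>} = characters smul"
      by (intro dense_unfixed_charactersI[OF assms(1,2) \<open>countable ?I\<close>]) blast
  qed
qed

theorem theorem4p8:
  fixes smul :: "complex \<Rightarrow> 'a::{comm_ring,real_normed_algebra,banach} \<Rightarrow> 'a"
    and st :: "'a \<Rightarrow> 'a"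
  assumes "complex_banach_scalar smul"
    and "completely_regular smul"
    and "semisimple smul"
    and "algebra_automorphism smul st"
  shows "(gelfand_topology smul closure_of nonperiodic_points smul st = characters smul
           \<longleftrightarrow> cp_maximal_abelian (\<lambda>c f \<mu>. c * f \<mu>) (hat_map st)
                 (range (gelfand smul)) (cp_emb ` range (gelfand smul)))
       \<and> (cp_maximal_abelian smul st UNIV (cp_emb ` UNIV)
           \<longleftrightarrow> gelfand_topology smul closure_of nonperiodic_points smul st = characters smul)"
proof -
  have "bij st" using assms(4) by (simp add: algebra_automorphism_def)
  have "intertwiners (hat_map st) (range (gelfand smul)) k = {0} \<longleftrightarrow> intertwiners st UNIV k = {0}"
    for k
    using assms(3,4) by (simp add: intertwiners_gelfand gelfand_image_eq_zero_iff)
  moreover note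
    invariant_subalgebra.maximal_abelian_iff_intertwiners[OF invariant_subalgebra_UNIV[OF assms(1,4)]]
    invariant_subalgebra.maximal_abelian_iff_intertwiners[OF invariant_subalgebra_gelfand[OF assms(4)]]
    dense_nonperiodic_points_iff[OF assms(1-3) \<open>bij st\<close>]
  ultimately show ?thesis by simp
qed

end
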